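(* Let $f\in\mathcal{S}(\mathbb{R})$ and fix $n\in\{0,1,2,3,\dots\}$. Then $D^{n+\frac1k}f(x)\to D^n f(x)$ as $k\to\infty$, uniformly in $x\in\mathbb{R}$.
   Context: $\mathcal{S}(\mathbb{R})$ is the Schwartz space. The Fourier transform is $\hat f(p)=\frac{1}{\sqrt{2\pi}}\int_{\mathbb{R}}e^{-ipx}f(x)\,dx$. For $\alpha\ge0$, $D^\alpha f(x)=\frac{1}{\sqrt{2\pi}}\int_{\mathbb{R}}e^{ipx}(ip)^\alpha\hat f(p)\,dp$, with $i^\alpha=\cos(\alpha\pi/2)+i\sin(\alpha\pi/2)$ and $(ip)^\alpha=i^\alpha p^\alpha$ for $p\ge0$, $(ip)^\alpha=(-i)^\alpha|p|^\alpha$ for $p<0$ (principal branch). For integer $n$, $D^n f=\frac{d^n f}{dx^n}$. *)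

theory Defs
  imports "HOL-Analysis.Analysis"
begin

fun hderiv :: "nat \<Rightarrow> (real \<Rightarrow> complex) \<Rightarrow> real \<Rightarrow> complex" where
  "hderiv 0 f = f"
| "hderiv (Suc j) f = (\<lambda>x. vector_derivative (hderiv j f) (at x))"

definition schwartz :: "(real \<Rightarrow> complex) \<Rightarrow> bool" where
  "schwartz f \<longleftrightarrow>
     (\<forall>j x. hderiv j f differentiable (at x)) \<and>
     (\<forall>m j. \<exists>C. \<forall>x. \<bar>x\<bar> ^ m * norm (hderiv j f x) \<le> C)"

definition fourier :: "(real \<Rightarrow> complex) \<Rightarrow> real \<Rightarrow> complex" where
  "fourier f p = complex_of_real (1 / sqrt (2 * pi)) *
     (LINT x|lborel. cis (- (p * x)) * f x)"

text \<open>|p|^alpha, with the convention |p|^0 = 1 (also at p = 0).\<close>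
definition rpow :: "real \<Rightarrow> real \<Rightarrow> real" where
  "rpow \<alpha> p = (if \<alpha> = 0 then 1 else \<bar>p\<bar> powr \<alpha>)"

text \<open>(ip)^alpha, principal branch: i^alpha p^alpha for p \<ge> 0, (-i)^alpha |p|^alpha for p < 0,
  where i^alpha = cos(alpha pi/2) + i sin(alpha pi/2) and (-i)^alpha = cos(alpha pi/2) - i sin(alpha pi/2).\<close>
definition ipow :: "real \<Rightarrow> real \<Rightarrow> complex" where
  "ipow \<alpha> p = (if p \<ge> 0 then cis (\<alpha> * pi / 2) else cis (- (\<alpha> * pi / 2))) *
                complex_of_real (rpow \<alpha> p)"

definition fracD :: "real \<Rightarrow> (real \<Rightarrow> complex) \<Rightarrow> real \<Rightarrow> complex" where
  "fracD \<alpha> f x = complex_of_real (1 / sqrt (2 * pi)) *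
     (LINT p|lborel. cis (p * x) * ipow \<alpha> p * fourier f p)"

end

theory Submission
  imports Defs "HOL-Probability.Sinc_Integral"
begin

text \<open>Write F for the Fourier transform. Integrating by parts, a Schwartz function f satisfies
  (ip)^m F f(p) = F(f^(m))(p), and the right-hand side is bounded by the L1 norm of f^(m); so F f
  decays faster than any power of p. For 0 \<le> \<alpha> \<le> N the multiplier satisfies
  |(ip)^\<alpha>| = |p|^\<alpha> \<le> 1 + |p|^N, hence |D^\<alpha> f(x) - D^\<beta> f(x)| is bounded, uniformly in x, by the
  integral of |(ip)^\<alpha> - (ip)^\<beta>| |F f(p)|, whose integrand has the integrable majorant
  2 (1 + |p|^N) |F f(p)|. Since (ip)^\<alpha> is continuous in \<alpha> for every p \<noteq> 0, dominated
  convergence shows that D^\<alpha> f \<rightarrow> D^\<beta> f uniformly as \<alpha> \<rightarrow> \<beta>; the theorem is the case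
  \<alpha> = n + 1/k, \<beta> = n.\<close>

definition rapidly_decreasing :: "(real \<Rightarrow> 'a::real_normed_vector) \<Rightarrow> bool" where
  "rapidly_decreasing g \<longleftrightarrow> (\<forall>m. \<exists>B. \<forall>x. \<bar>x\<bar> ^ m * norm (g x) \<le> B)"

lemma rapidly_decreasing_le_inverse_1_plus_square:
  assumes "rapidly_decreasing g"
  obtains C where "\<And>x. \<bar>x\<bar> ^ m * norm (g x) \<le> C * inverse (1 + x\<^sup>2)"
proof -
  obtain B1 where B1: "\<And>x. \<bar>x\<bar> ^ m * norm (g x) \<le> B1"
    using assms unfolding rapidly_decreasing_def by blast
  obtain B2 where B2: "\<And>x. \<bar>x\<bar> ^ (m + 2) * norm (g x) \<le> B2"
    using assms unfolding rapidly_decreasing_def by blast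
  have "\<bar>x\<bar> ^ m * norm (g x) \<le> (B1 + B2) * inverse (1 + x\<^sup>2)" for x
  proof -
    have "(1 + x\<^sup>2) * (\<bar>x\<bar> ^ m * norm (g x)) = \<bar>x\<bar> ^ m * norm (g x) + \<bar>x\<bar> ^ (m + 2) * norm (g x)"
      by (simp add: algebra_simps power_add power2_abs power2_eq_square)
    also have "\<dots> \<le> B1 + B2"
      using B1 B2 by (rule add_mono)
    finally show ?thesis
      by (simp add: field_simps add_pos_nonneg)
  qed
  then show ?thesis by (rule that)
qed

lemma rapidly_decreasing_tendsto_0:
  assumes "rapidly_decreasing g"
  shows "(g \<longlongrightarrow> 0) at_infinity"
proof -
  obtain B where B: "\<And>x. \<bar>x\<bar> ^ 1 * norm (g x) \<le> B"
    using assms unfolding rapidly_decreasing_def by blast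
  have "eventually (\<lambda>x. norm (g x) \<le> B * norm (inverse x)) at_infinity"
    unfolding eventually_at_infinity
  proof (intro exI allI impI)
    fix x :: real assume "1 \<le> norm x"
    then show "norm (g x) \<le> B * norm (inverse x)"
      using B[of x] by (simp add: field_simps)
  qed
  moreover have "((\<lambda>x::real. B * norm (inverse x)) \<longlongrightarrow> 0) at_infinity"
    using tendsto_mult_right_zero[OF tendsto_norm_zero[OF tendsto_inverse_0]] .
  ultimately show ?thesis
    by (rule Lim_null_comparison)
qed

lemma integrable_le_inverse_1_plus_square:
  fixes g :: "real \<Rightarrow> 'b::{banach, second_countable_topology}"
  assumes "g \<in> borel_measurable lborel" "\<And>x. norm (g x) \<le> C * inverse (1 + x\<^sup>2)"
  shows "integrable lborel g"
proof (rule Bochner_Integration.integrable_bound[OF _ assms(1)])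
  show "integrable lborel (\<lambda>x. C * inverse (1 + x\<^sup>2))"
    using integrable_inverse_1_plus_square by (simp add: set_integrable_def)
  show "AE x in lborel. norm (g x) \<le> norm (C * inverse (1 + x\<^sup>2))"
    by (intro AE_I2) (rule order_trans[OF assms(2)], simp)
qed

lemma integrable_rapidly_decreasing:
  fixes g :: "real \<Rightarrow> 'b::{banach, second_countable_topology}"
  assumes "g \<in> borel_measurable lborel" "rapidly_decreasing g"
  shows "integrable lborel g"
proof -
  obtain C where "\<And>x. \<bar>x\<bar> ^ 0 * norm (g x) \<le> C * inverse (1 + x\<^sup>2)"
    using rapidly_decreasing_le_inverse_1_plus_square[OF assms(2)] by blast
  then have "\<And>x. norm (g x) \<le> C * inverse (1 + x\<^sup>2)"
    by simp
  then show ?thesis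
    by (rule integrable_le_inverse_1_plus_square[OF assms(1)])
qed

lemma schwartz_has_vector_derivative:
  "schwartz f \<Longrightarrow> (hderiv j f has_vector_derivative hderiv (Suc j) f x) (at x)"
  unfolding schwartz_def by (simp add: vector_derivative_works[symmetric])

lemma schwartz_continuous_hderiv:
  "schwartz f \<Longrightarrow> continuous_on UNIV (hderiv j f)"
  unfolding schwartz_def
  by (simp add: continuous_at_imp_continuous_on differentiable_imp_continuous_within)

lemma schwartz_rapidly_decreasing_hderiv:
  "schwartz f \<Longrightarrow> rapidly_decreasing (hderiv j f)"
  unfolding schwartz_def rapidly_decreasing_def by blast

lemma schwartz_integrable_hderiv:
  "schwartz f \<Longrightarrow> integrable lborel (hderiv j f)"
  by (intro integrable_rapidly_decreasing schwartz_rapidly_decreasing_hderiv)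
    (simp add: borel_measurable_continuous_onI schwartz_continuous_hderiv)

lemma borel_measurable_cis [measurable]: "cis \<in> borel_measurable borel"
  by (intro borel_measurable_continuous_onI continuous_intros)

lemma integrable_cis_mult:
  fixes h :: "real \<Rightarrow> complex"
  assumes "integrable lborel h"
  shows "integrable lborel (\<lambda>x. cis (- (t * x)) * h x)"
proof (rule Bochner_Integration.integrable_bound[OF assms])
  have [measurable]: "h \<in> borel_measurable lborel"
    using assms by (rule borel_measurable_integrable)
  show "(\<lambda>x. cis (- (t * x)) * h x) \<in> borel_measurable lborel"
    by measurable
qed (simp add: norm_mult)

lemma borel_measurable_fourier:
  assumes [measurable]: "h \<in> borel_measurable lborel"
  shows "fourier h \<in> borel_measurable lborel"
proof -
  have [measurable]: "(\<lambda>(p, x). cis (- (p * x)) * h x) \<in> borel_measurable (lborel \<Otimes>\<^sub>M lborel)"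
    by measurable
  show ?thesis
    unfolding fourier_def[abs_def] by measurable
qed

lemma norm_fourier_le: "norm (fourier h p) \<le> 1 / sqrt (2 * pi) * (LINT x|lborel. norm (h x))"
proof -
  have "norm (fourier h p) = 1 / sqrt (2 * pi) * norm (LINT x|lborel. cis (- (p * x)) * h x)"
    unfolding fourier_def by (simp add: norm_mult norm_divide)
  also have "\<dots> \<le> 1 / sqrt (2 * pi) * (LINT x|lborel. norm (cis (- (p * x)) * h x))"
    by (intro mult_left_mono integral_norm_bound) auto
  finally show ?thesis
    by (simp add: norm_mult)
qed

lemma fourier_vector_derivative:
  fixes h h' :: "real \<Rightarrow> complex"
  assumes deriv: "\<And>x. (h has_vector_derivative h' x) (at x)"
    and cont: "continuous_on UNIV h'"
    and int: "integrable lborel h" "integrable lborel h'"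
    and lim: "(h \<longlongrightarrow> 0) at_infinity"
  shows "fourier h' p = \<i> * p * fourier h p"
proof -
  define F where "F x = cis (- (p * x)) * h x" for x
  define G where "G x = cis (- (p * x)) * h' x - \<i> * p * F x" for x
  have int_F: "integrable lborel F"
    unfolding F_def using int(1) by (rule integrable_cis_mult)
  have int_G: "integrable lborel G"
    unfolding G_def
    by (intro Bochner_Integration.integrable_diff integrable_mult_right int_F integrable_cis_mult int(2))
  have F_deriv: "(F has_vector_derivative G x) (at x)" for x
    using deriv[of x] unfolding F_def G_def has_vector_derivative_def
    by (auto intro!: derivative_eq_intros simp: algebra_simps scaleR_conv_of_real fun_eq_iff)
  have F_lim: "(F \<longlongrightarrow> 0) at_top" "(F \<longlongrightarrow> 0) at_bot"
  proof -
    have "(F \<longlongrightarrow> 0) at_infinity"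
      unfolding F_def
      by (rule tendsto_norm_zero_cancel) (simp add: norm_mult tendsto_norm_zero[OF lim])
    then show "(F \<longlongrightarrow> 0) at_top" "(F \<longlongrightarrow> 0) at_bot"
      by (auto elim: tendsto_mono[rotated] simp: at_top_le_at_infinity at_bot_le_at_infinity)
  qed
  have "(LBINT x=-\<infinity>..\<infinity>. G x) = 0 - 0"
  proof (rule interval_integral_FTC_integrable[where F=F])
    show "isCont G x" for x
      unfolding G_def F_def
      using has_vector_derivative_continuous[OF deriv[of x]] cont
      by (auto simp: continuous_on_eq_continuous_at cis_conv_exp intro!: continuous_intros)
    show "set_integrable lborel (einterval (-\<infinity>) \<infinity>) G"
      using int_G by (simp add: set_integrable_def)
  qed (use F_deriv F_lim in \<open>simp_all add: ereal_tendsto_simps\<close>)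
  then have "(LINT x|lborel. G x) = 0"
    by (simp add: interval_lebesgue_integral_def set_lebesgue_integral_def)
  then have "(LINT x|lborel. cis (- (p * x)) * h' x) = \<i> * p * (LINT x|lborel. F x)"
    unfolding G_def using int_F integrable_cis_mult[OF int(2)] by simp
  then show ?thesis
    unfolding fourier_def F_def by simp
qed

lemma schwartz_fourier_hderiv_Suc:
  assumes "schwartz f"
  shows "fourier (hderiv (Suc j) f) p = \<i> * p * fourier (hderiv j f) p"
  using assms
  by (intro fourier_vector_derivative schwartz_has_vector_derivative schwartz_continuous_hderiv
      schwartz_integrable_hderiv rapidly_decreasing_tendsto_0 schwartz_rapidly_decreasing_hderiv)

lemma schwartz_fourier_hderiv:
  assumes "schwartz f"
  shows "fourier (hderiv m f) p = (\<i> * p) ^ m * fourier f p"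
proof (induction m)
  case (Suc m)
  then show ?case
    using schwartz_fourier_hderiv_Suc[OF assms, of m p] by simp
qed simp

lemma schwartz_rapidly_decreasing_fourier:
  assumes "schwartz f"
  shows "rapidly_decreasing (fourier f)"
  unfolding rapidly_decreasing_def
proof (intro allI exI)
  fix m p
  have "\<bar>p\<bar> ^ m * norm (fourier f p) = norm (fourier (hderiv m f) p)"
    by (simp add: schwartz_fourier_hderiv[OF assms] norm_mult norm_power)
  also have "\<dots> \<le> 1 / sqrt (2 * pi) * (LINT x|lborel. norm (hderiv m f x))"
    by (rule norm_fourier_le)
  finally show "\<bar>p\<bar> ^ m * norm (fourier f p) \<le> 1 / sqrt (2 * pi) * (LINT x|lborel. norm (hderiv m f x))" .
qed

lemma schwartz_borel_measurable: "schwartz f \<Longrightarrow> f \<in> borel_measurable lborel"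
  using schwartz_continuous_hderiv[of f 0] by (simp add: borel_measurable_continuous_onI)

lemma schwartz_integrable_weighted_fourier:
  assumes "schwartz f"
  shows "integrable lborel (\<lambda>p. (1 + \<bar>p\<bar> ^ N) * norm (fourier f p))"
proof -
  have decr: "rapidly_decreasing (fourier f)"
    using assms by (rule schwartz_rapidly_decreasing_fourier)
  obtain C0 where C0: "\<And>p. \<bar>p\<bar> ^ 0 * norm (fourier f p) \<le> C0 * inverse (1 + p\<^sup>2)"
    using rapidly_decreasing_le_inverse_1_plus_square[OF decr] by blast
  obtain C where C: "\<And>p. \<bar>p\<bar> ^ N * norm (fourier f p) \<le> C * inverse (1 + p\<^sup>2)"
    using rapidly_decreasing_le_inverse_1_plus_square[OF decr] by blast
  have [measurable]: "fourier f \<in> borel_measurable lborel"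
    using assms by (intro borel_measurable_fourier schwartz_borel_measurable)
  show ?thesis
  proof (rule integrable_le_inverse_1_plus_square)
    show "norm ((1 + \<bar>p\<bar> ^ N) * norm (fourier f p)) \<le> (C0 + C) * inverse (1 + p\<^sup>2)" for p
      using C0[of p] C[of p] by (simp add: algebra_simps)
  qed measurable
qed

lemma norm_ipow: "norm (ipow a p) = rpow a p"
  by (simp add: ipow_def rpow_def norm_mult)

lemma rpow_le_1_plus_power:
  assumes "0 \<le> a" "a \<le> real N"
  shows "rpow a p \<le> 1 + \<bar>p\<bar> ^ N"
proof (cases "\<bar>p\<bar> \<le> 1")
  case True
  then have "\<bar>p\<bar> powr a \<le> 1"
    using assms(1) by (intro powr_le1) auto
  then show ?thesis
    by (simp add: rpow_def add_increasing2)
next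
  case False
  then have "\<bar>p\<bar> powr a \<le> \<bar>p\<bar> powr real N"
    using assms(2) by (intro powr_mono) auto
  also have "\<dots> = \<bar>p\<bar> ^ N"
    using False by (intro powr_realpow) auto
  finally show ?thesis
    by (simp add: rpow_def)
qed

text \<open>At p = 0 this fails for a = 0 (rpow 0 0 = 1 but 0 powr a = 0), so the pointwise
  convergence of the integrands below holds only almost everywhere.\<close>

lemma isCont_ipow_exponent:
  assumes "p \<noteq> 0"
  shows "isCont (\<lambda>a. ipow a p) a"
proof -
  have "(\<lambda>a. ipow a p) =
      (\<lambda>a. (if 0 \<le> p then cis (a * pi / 2) else cis (- (a * pi / 2))) * of_real (\<bar>p\<bar> powr a))"
    using assms by (simp add: fun_eq_iff ipow_def rpow_def)
  then show ?thesis
    using assms by (cases "0 \<le> p") (auto simp: cis_conv_exp intro!: continuous_intros)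
qed

lemma borel_measurable_ipow [measurable]: "ipow a \<in> borel_measurable borel"
  unfolding ipow_def[abs_def] rpow_def by measurable

lemma schwartz_integrable_fracD_integrand:
  assumes "schwartz f" "0 \<le> a"
  shows "integrable lborel (\<lambda>p. cis (p * x) * ipow a p * fourier f p)"
proof (rule Bochner_Integration.integrable_bound)
  let ?N = "nat \<lceil>a\<rceil>"
  show "integrable lborel (\<lambda>p. (1 + \<bar>p\<bar> ^ ?N) * norm (fourier f p))"
    using assms(1) by (rule schwartz_integrable_weighted_fourier)
  have [measurable]: "fourier f \<in> borel_measurable lborel"
    using assms(1) by (intro borel_measurable_fourier schwartz_borel_measurable)
  show "(\<lambda>p. cis (p * x) * ipow a p * fourier f p) \<in> borel_measurable lborel"
    by measurable
  have "rpow a p \<le> 1 + \<bar>p\<bar> ^ ?N" for p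
    using assms(2) by (intro rpow_le_1_plus_power) auto
  then show "AE p in lborel. norm (cis (p * x) * ipow a p * fourier f p)
      \<le> norm ((1 + \<bar>p\<bar> ^ ?N) * norm (fourier f p))"
    by (intro AE_I2) (simp add: norm_mult norm_ipow mult_right_mono)
qed

lemma schwartz_norm_fracD_diff_le:
  assumes "schwartz f" "0 \<le> a" "0 \<le> b"
  shows "norm (fracD a f x - fracD b f x)
    \<le> 1 / sqrt (2 * pi) * (LINT p|lborel. norm (ipow a p - ipow b p) * norm (fourier f p))"
proof -
  let ?g = "\<lambda>a p. cis (p * x) * ipow a p * fourier f p"
  have "fracD a f x - fracD b f x
      = of_real (1 / sqrt (2 * pi)) * (LINT p|lborel. ?g a p - ?g b p)"
    using schwartz_integrable_fracD_integrand[OF assms(1,2)] schwartz_integrable_fracD_integrand[OF assms(1,3)]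
    unfolding fracD_def by (simp only: Bochner_Integration.integral_diff right_diff_distrib)
  then have "norm (fracD a f x - fracD b f x) = 1 / sqrt (2 * pi) * norm (LINT p|lborel. ?g a p - ?g b p)"
    by (simp only: norm_mult norm_of_real) simp
  also have "\<dots> \<le> 1 / sqrt (2 * pi) * (LINT p|lborel. norm (?g a p - ?g b p))"
    by (intro mult_left_mono integral_norm_bound) simp
  also have "(LINT p|lborel. norm (?g a p - ?g b p))
      = (LINT p|lborel. norm (ipow a p - ipow b p) * norm (fourier f p))"
    by (intro Bochner_Integration.integral_cong)
      (auto simp: norm_mult simp flip: right_diff_distrib left_diff_distrib)
  finally show ?thesis .
qed

lemma schwartz_tendsto_integral_ipow_diff:
  assumes f: "schwartz f" and a: "\<And>k. 0 \<le> a k" "\<And>k. a k \<le> real N"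
    and \<alpha>: "0 \<le> \<alpha>" "\<alpha> \<le> real N" and lim: "a \<longlonglongrightarrow> \<alpha>"
  shows "(\<lambda>k. LINT p|lborel. norm (ipow (a k) p - ipow \<alpha> p) * norm (fourier f p)) \<longlonglongrightarrow> 0"
proof -
  have [measurable]: "fourier f \<in> borel_measurable lborel"
    using f by (intro borel_measurable_fourier schwartz_borel_measurable)
  have "(\<lambda>k. LINT p|lborel. norm (ipow (a k) p - ipow \<alpha> p) * norm (fourier f p))
      \<longlonglongrightarrow> integral\<^sup>L lborel (\<lambda>p::real. 0)"
  proof (rule Bochner_Integration.integral_dominated_convergence
      [where w = "\<lambda>p. 2 * ((1 + \<bar>p\<bar> ^ N) * norm (fourier f p))"])
    show "integrable lborel (\<lambda>p. 2 * ((1 + \<bar>p\<bar> ^ N) * norm (fourier f p)))"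
      using f by (intro integrable_mult_right schwartz_integrable_weighted_fourier)
    show "AE p in lborel. (\<lambda>k. norm (ipow (a k) p - ipow \<alpha> p) * norm (fourier f p)) \<longlonglongrightarrow> 0"
    proof (rule AE_mp[OF AE_lborel_singleton[of 0]], intro AE_I2 impI)
      fix p :: real assume "p \<noteq> 0"
      then have "(\<lambda>k. ipow (a k) p) \<longlonglongrightarrow> ipow \<alpha> p"
        using isCont_tendsto_compose[OF isCont_ipow_exponent lim] by blast
      then have "(\<lambda>k. norm (ipow (a k) p - ipow \<alpha> p) * norm (fourier f p)) \<longlonglongrightarrow> 0 * norm (fourier f p)"
        by (intro tendsto_mult tendsto_norm_zero tendsto_const) (simp add: LIM_zero)
      then show "(\<lambda>k. norm (ipow (a k) p - ipow \<alpha> p) * norm (fourier f p)) \<longlonglongrightarrow> 0"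
        by simp
    qed
    show "AE p in lborel. norm (norm (ipow (a k) p - ipow \<alpha> p) * norm (fourier f p))
        \<le> 2 * ((1 + \<bar>p\<bar> ^ N) * norm (fourier f p))" for k
    proof (intro AE_I2)
      fix p
      have "norm (ipow (a k) p - ipow \<alpha> p) \<le> rpow (a k) p + rpow \<alpha> p"
        using norm_triangle_ineq4[of "ipow (a k) p" "ipow \<alpha> p"] by (simp only: norm_ipow)
      also have "\<dots> \<le> 2 * (1 + \<bar>p\<bar> ^ N)"
        using rpow_le_1_plus_power[OF a, of k p] rpow_le_1_plus_power[OF \<alpha>, of p] by simp
      finally have "norm (ipow (a k) p - ipow \<alpha> p) * norm (fourier f p)
          \<le> 2 * (1 + \<bar>p\<bar> ^ N) * norm (fourier f p)"
        by (rule mult_right_mono) simp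
      then show "norm (norm (ipow (a k) p - ipow \<alpha> p) * norm (fourier f p))
          \<le> 2 * ((1 + \<bar>p\<bar> ^ N) * norm (fourier f p))"
        by (simp only: real_norm_def abs_mult abs_norm_cancel mult.assoc)
    qed
  qed measurable
  then show ?thesis
    by simp
qed

lemma uniform_limit_of_dist_le:
  assumes "\<And>n x. x \<in> S \<Longrightarrow> dist (f n x) (l x) \<le> b n" and "(b \<longlongrightarrow> 0) F"
  shows "uniform_limit S f l F"
proof (rule uniform_limitI)
  fix e :: real assume "0 < e"
  with assms(2) have "eventually (\<lambda>n. b n < e) F"
    by (rule order_tendstoD)
  then show "\<forall>\<^sub>F n in F. \<forall>x\<in>S. dist (f n x) (l x) < e"
    by (rule eventually_mono) (use assms(1) in \<open>auto intro: le_less_trans\<close>)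
qed

lemma schwartz_uniform_limit_fracD:
  assumes f: "schwartz f" and a: "\<And>k. 0 \<le> a k" and lim: "a \<longlonglongrightarrow> \<alpha>"
  shows "uniform_limit UNIV (\<lambda>k. fracD (a k) f) (fracD \<alpha> f) sequentially"
proof -
  obtain K where K: "\<And>k. norm (a k) \<le> K"
    using BseqE[OF convergent_imp_Bseq[OF convergentI[OF lim]]] by metis
  define N where "N = nat \<lceil>K\<rceil>"
  have aN: "a k \<le> real N" for k
    using K[of k] real_nat_ceiling_ge[of K] unfolding N_def real_norm_def by linarith
  have \<alpha>: "0 \<le> \<alpha>" "\<alpha> \<le> real N"
    using LIMSEQ_le_const[OF lim] LIMSEQ_le_const2[OF lim] a aN by blast+
  show ?thesis
  proof (rule uniform_limit_of_dist_le)
    show "dist (fracD (a k) f x) (fracD \<alpha> f x)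
        \<le> 1 / sqrt (2 * pi) * (LINT p|lborel. norm (ipow (a k) p - ipow \<alpha> p) * norm (fourier f p))"
      for k x
      unfolding dist_norm using f a \<alpha>(1) by (rule schwartz_norm_fracD_diff_le)
    show "(\<lambda>k. 1 / sqrt (2 * pi) * (LINT p|lborel. norm (ipow (a k) p - ipow \<alpha> p) * norm (fourier f p)))
        \<longlonglongrightarrow> 0"
      using tendsto_mult_right_zero[OF schwartz_tendsto_integral_ipow_diff[OF f a aN \<alpha> lim]] .
  qed
qed

theorem theorem3:
  fixes f :: "real \<Rightarrow> complex" and n :: nat
  assumes "schwartz f"
  shows "uniform_limit UNIV (\<lambda>k x. fracD (real n + 1 / real k) f x) (fracD (real n) f) sequentially"
proof -
  have "(\<lambda>k. real n + 1 / real k) \<longlonglongrightarrow> real n + 0"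
    by (intro tendsto_add tendsto_const lim_1_over_n)
  then show ?thesis
    using assms by (intro schwartz_uniform_limit_fracD) simp_all
qed

end
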